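(* Let $\psi\in(-\pi,\pi]$, $\tau>0$, and $k\in\mathbb{Z}\setminus\{0\}$. Then for every $(a,w)\in\mathbb{R}\times(\mathbb{C}\setminus\{0\})$ with $|a|<|w|$ and every $s>0$, $(sa,sw)\in\Gamma_k(\psi;\tau)$ if and only if $s = \frac{1}{\tau}\tau^{+}_{k}(a,w)$ (when $k>0$), respectively $s=\frac1\tau\tau^{-}_{-k}(a,w)$ (when $k<0$), and $\operatorname{Arg}(w)=\psi$.
   Context: $\operatorname{Arg}(w)\in(-\pi,\pi]$ is the principal argument; $\arccos:[-1,1]\to[0,\pi]$. For $|a|<|w|$ and integers $n\ge1$: $\tau_n^\pm(a,w) := \frac{1}{\sqrt{|w|^2-a^2}}[\pm\operatorname{Arg}(w)-\arccos(a/|w|)+2n\pi]$. $a(\Omega,\psi;\tau) := -\Omega\cot(\tau\Omega-\psi)$, $\rho(\Omega,\psi;\tau) := -\Omega/\sin(\tau\Omega-\psi)$. For $k\ge1$, $I_k(\psi) := (-\pi,0)+\psi+2k\pi$; for $k\le-1$, $I_k(\psi) := (0,\pi)+\psi+2k\pi$. $\Gamma_k(\psi;\tau) := \{(a(\Omega,\psi;\tau),\,\rho(\Omega,\psi;\tau)e^{i\psi}) : \tau\Omega\in I_k(\psi)\}\subset\mathbb{R}\times\mathbb{C}$. *)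

theory Defs
  imports "HOL-Analysis.Analysis"
begin

text \<open>Arg (HOL-Analysis) is the principal argument in (-pi, pi]; arccos maps [-1,1] to [0,pi].\<close>

definition tau_plus :: "nat \<Rightarrow> real \<Rightarrow> complex \<Rightarrow> real" where
  "tau_plus n a w = (Arg w - arccos (a / cmod w) + 2 * real n * pi) / sqrt ((cmod w)\<^sup>2 - a\<^sup>2)"

definition tau_minus :: "nat \<Rightarrow> real \<Rightarrow> complex \<Rightarrow> real" where
  "tau_minus n a w = (- Arg w - arccos (a / cmod w) + 2 * real n * pi) / sqrt ((cmod w)\<^sup>2 - a\<^sup>2)"

definition a_fun :: "real \<Rightarrow> real \<Rightarrow> real \<Rightarrow> real" where
  "a_fun \<Omega> \<psi> \<tau> = - \<Omega> * cot (\<tau> * \<Omega> - \<psi>)"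

definition rho_fun :: "real \<Rightarrow> real \<Rightarrow> real \<Rightarrow> real" where
  "rho_fun \<Omega> \<psi> \<tau> = - \<Omega> / sin (\<tau> * \<Omega> - \<psi>)"

definition I_k :: "int \<Rightarrow> real \<Rightarrow> real set" where
  "I_k k \<psi> = (if k \<ge> 1 then {-pi + \<psi> + 2 * of_int k * pi <..< \<psi> + 2 * of_int k * pi}
              else {\<psi> + 2 * of_int k * pi <..< pi + \<psi> + 2 * of_int k * pi})"

definition Gamma_k :: "int \<Rightarrow> real \<Rightarrow> real \<Rightarrow> (real \<times> complex) set" where
  "Gamma_k k \<psi> \<tau> = {(a_fun \<Omega> \<psi> \<tau>, complex_of_real (rho_fun \<Omega> \<psi> \<tau>) * cis \<psi>) | \<Omega>. \<tau> * \<Omega> \<in> I_k k \<psi>}"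

end

theory Submission
  imports Defs
begin

text \<open>Substituting \<open>\<tau> \<Omega> = 2 k \<pi> + \<psi> - sgn k \<cdot> \<beta>\<close> with \<open>\<beta> \<in> (0, \<pi>)\<close> writes each branch
  \<open>\<Gamma>\<^sub>k\<close> in polar form: its points are \<open>(\<rho> cos \<beta>, \<rho> e\<^sup>i\<^sup>\<psi>)\<close> with the explicit radius
  \<open>\<rho> = (2 |k| \<pi> + sgn k \<cdot> \<psi> - \<beta>) / (\<tau> sin \<beta>) > 0\<close>. For a point \<open>(s a, s w)\<close> the second
  coordinate forces \<open>Arg w = \<psi>\<close> and \<open>\<rho> = s |w|\<close>, the first then forces
  \<open>\<beta> = arccos (a / |w|)\<close>, and the radius equation becomes linear in \<open>s\<close>, with solution
  \<open>\<tau>\<^sup>\<plusminus>\<^sub>|\<^sub>k\<^sub>|(a, w) / \<tau>\<close>.\<close>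

definition Gamma_radius :: "int \<Rightarrow> real \<Rightarrow> real \<Rightarrow> real \<Rightarrow> real" where
  "Gamma_radius k \<psi> \<tau> \<beta> = (2 * of_int \<bar>k\<bar> * pi + of_int (sgn k) * \<psi> - \<beta>) / (\<tau> * sin \<beta>)"

lemma sin_cos_2_int_pi_minus:
  fixes k :: int and x :: real
  shows "sin (2 * of_int k * pi - x) = - sin x" "cos (2 * of_int k * pi - x) = cos x"
  using sin_int_2pin[of k] cos_int_2pin[of k]
  by (simp_all add: sin_diff cos_diff mult.commute mult.left_commute)

lemma mem_I_k_iff:
  assumes "k \<noteq> 0"
  shows "x \<in> I_k k \<psi> \<longleftrightarrow> (\<exists>\<beta>\<in>{0<..<pi}. x = 2 * of_int k * pi + \<psi> - of_int (sgn k) * \<beta>)"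
proof (cases "k > 0")
  case True
  then show ?thesis
    by (auto simp: I_k_def intro!: bexI[of _ "2 * of_int k * pi + \<psi> - x"])
next
  case False
  with assms have "k < 0" by simp
  then show ?thesis
    by (auto simp: I_k_def intro!: bexI[of _ "x - 2 * of_int k * pi - \<psi>"])
qed

lemma a_rho_fun_polar:
  assumes "k \<noteq> 0" "\<tau> \<noteq> 0"
    and \<Omega>: "\<tau> * \<Omega> = 2 * of_int k * pi + \<psi> - of_int (sgn k) * \<beta>"
  shows "rho_fun \<Omega> \<psi> \<tau> = Gamma_radius k \<psi> \<tau> \<beta>"
    and "a_fun \<Omega> \<psi> \<tau> = Gamma_radius k \<psi> \<tau> \<beta> * cos \<beta>"
proof -
  define \<sigma> :: real where "\<sigma> = of_int (sgn k)"
  have \<sigma>: "\<sigma> = 1 \<or> \<sigma> = -1" "\<sigma> * \<sigma> = 1" "\<sigma> * of_int k = of_int \<bar>k\<bar>"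
    using assms(1) by (auto simp: \<sigma>_def sgn_if)
  have arg: "\<tau> * \<Omega> - \<psi> = 2 * of_int k * pi - \<sigma> * \<beta>"
    using \<Omega> by (simp add: \<sigma>_def)
  have sin_arg: "sin (\<tau> * \<Omega> - \<psi>) = - \<sigma> * sin \<beta>" and cos_arg: "cos (\<tau> * \<Omega> - \<psi>) = cos \<beta>"
    using \<sigma>(1) unfolding arg sin_cos_2_int_pi_minus by auto
  have "\<tau> * (\<sigma> * \<Omega>) = \<sigma> * (\<tau> * \<Omega>)"
    by simp
  also have "\<dots> = 2 * (\<sigma> * of_int k) * pi + \<sigma> * \<psi> - (\<sigma> * \<sigma>) * \<beta>"
    unfolding \<Omega> \<sigma>_def by (simp add: algebra_simps)
  finally have "\<sigma> * \<Omega> = (2 * of_int \<bar>k\<bar> * pi + \<sigma> * \<psi> - \<beta>) / \<tau>"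
    using \<sigma>(2,3) assms(2) by (simp add: eq_divide_eq mult.commute)
  moreover have "rho_fun \<Omega> \<psi> \<tau> = \<sigma> * \<Omega> / sin \<beta>"
    using \<sigma>(1) unfolding rho_fun_def sin_arg by auto
  ultimately have "rho_fun \<Omega> \<psi> \<tau> = Gamma_radius k \<psi> \<tau> \<beta>"
    by (simp add: Gamma_radius_def \<sigma>_def)
  moreover have "a_fun \<Omega> \<psi> \<tau> = rho_fun \<Omega> \<psi> \<tau> * cos \<beta>"
    by (simp add: a_fun_def rho_fun_def cot_def cos_arg)
  ultimately show "rho_fun \<Omega> \<psi> \<tau> = Gamma_radius k \<psi> \<tau> \<beta>"
    and "a_fun \<Omega> \<psi> \<tau> = Gamma_radius k \<psi> \<tau> \<beta> * cos \<beta>"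
    by simp_all
qed

lemma mem_Gamma_k_polar:
  assumes "k \<noteq> 0" "\<tau> \<noteq> 0"
  shows "(b, z) \<in> Gamma_k k \<psi> \<tau> \<longleftrightarrow>
    (\<exists>\<beta>\<in>{0<..<pi}. b = Gamma_radius k \<psi> \<tau> \<beta> * cos \<beta> \<and>
                   z = of_real (Gamma_radius k \<psi> \<tau> \<beta>) * cis \<psi>)"
proof
  assume "(b, z) \<in> Gamma_k k \<psi> \<tau>"
  then obtain \<Omega> \<beta> where \<beta>: "\<beta> \<in> {0<..<pi}"
    and \<Omega>: "\<tau> * \<Omega> = 2 * of_int k * pi + \<psi> - of_int (sgn k) * \<beta>"
    and bz: "b = a_fun \<Omega> \<psi> \<tau>" "z = of_real (rho_fun \<Omega> \<psi> \<tau>) * cis \<psi>"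
    unfolding Gamma_k_def mem_I_k_iff[OF assms(1)] by blast
  then show "\<exists>\<beta>\<in>{0<..<pi}. b = Gamma_radius k \<psi> \<tau> \<beta> * cos \<beta> \<and>
                   z = of_real (Gamma_radius k \<psi> \<tau> \<beta>) * cis \<psi>"
    using a_rho_fun_polar[OF assms \<Omega>] by auto
next
  assume "\<exists>\<beta>\<in>{0<..<pi}. b = Gamma_radius k \<psi> \<tau> \<beta> * cos \<beta> \<and>
                        z = of_real (Gamma_radius k \<psi> \<tau> \<beta>) * cis \<psi>"
  then obtain \<beta> where \<beta>: "\<beta> \<in> {0<..<pi}"
    and bz: "b = Gamma_radius k \<psi> \<tau> \<beta> * cos \<beta>" "z = of_real (Gamma_radius k \<psi> \<tau> \<beta>) * cis \<psi>"
    by blast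
  define \<Omega> where "\<Omega> = (2 * of_int k * pi + \<psi> - of_int (sgn k) * \<beta>) / \<tau>"
  have \<Omega>: "\<tau> * \<Omega> = 2 * of_int k * pi + \<psi> - of_int (sgn k) * \<beta>"
    using assms(2) by (simp add: \<Omega>_def)
  show "(b, z) \<in> Gamma_k k \<psi> \<tau>"
    using a_rho_fun_polar[OF assms \<Omega>] \<beta> \<Omega> bz
    unfolding Gamma_k_def mem_I_k_iff[OF assms(1)] by (auto intro!: exI[of _ \<Omega>])
qed

lemma Gamma_radius_pos:
  assumes "k \<noteq> 0" "\<tau> > 0" "-pi < \<psi>" "\<psi> \<le> pi" "0 < \<beta>" "\<beta> < pi"
  shows "Gamma_radius k \<psi> \<tau> \<beta> > 0"
proof -
  have "2 * pi \<le> 2 * of_int \<bar>k\<bar> * pi"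
    using assms(1) by simp
  moreover have "- pi \<le> of_int (sgn k) * \<psi>"
    using assms(1,3,4) by (auto simp: sgn_if)
  ultimately have "0 < 2 * of_int \<bar>k\<bar> * pi + of_int (sgn k) * \<psi> - \<beta>"
    using assms(6) by linarith
  moreover have "sin \<beta> > 0"
    using assms(5,6) by (rule sin_gt_zero)
  ultimately show ?thesis
    using assms(2) unfolding Gamma_radius_def by simp
qed

lemma scaled_eq_rcis_iff:
  assumes "s > 0" "w \<noteq> 0" "\<rho> > 0" "-pi < \<psi>" "\<psi> \<le> pi"
  shows "of_real s * w = of_real \<rho> * cis \<psi> \<longleftrightarrow> Arg w = \<psi> \<and> s * cmod w = \<rho>"
proof
  assume eq: "of_real s * w = of_real \<rho> * cis \<psi>"
  have "Arg w = Arg (of_real s * w)"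
    using assms(1) by simp
  also have "\<dots> = \<psi>"
    using assms(3-5) eq by (intro Arg_unique'[of \<rho>]) (auto simp: rcis_def)
  finally show "Arg w = \<psi> \<and> s * cmod w = \<rho>"
    using arg_cong[OF eq, of cmod] assms(1,3) by (simp add: norm_mult)
next
  assume "Arg w = \<psi> \<and> s * cmod w = \<rho>"
  then show "of_real s * w = of_real \<rho> * cis \<psi>"
    using rcis_cmod_Arg[of w] by (metis mult.assoc of_real_mult rcis_def)
qed

lemma sqrt_diff_square_eq_sin_arccos:
  fixes a r :: real
  assumes "\<bar>a\<bar> < r"
  shows "sqrt (r\<^sup>2 - a\<^sup>2) = r * sin (arccos (a / r))"
proof -
  have r: "r > 0" and bounds: "-1 \<le> a / r" "a / r \<le> 1"
    using assms by (auto simp: field_simps abs_less_iff)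
  have "1 - (a / r)\<^sup>2 = (r\<^sup>2 - a\<^sup>2) / r\<^sup>2"
    using r by (simp add: field_simps)
  then show ?thesis
    using r bounds by (simp add: sin_arccos real_sqrt_divide)
qed

lemma scaled_mem_Gamma_k_iff:
  assumes k: "k \<noteq> 0" and \<tau>: "\<tau> > 0" and \<psi>: "-pi < \<psi>" "\<psi> \<le> pi"
    and w: "w \<noteq> 0" and aw: "\<bar>a\<bar> < cmod w" and s: "s > 0"
  shows "(s * a, of_real s * w) \<in> Gamma_k k \<psi> \<tau> \<longleftrightarrow>
    Arg w = \<psi> \<and> \<tau> * s * sqrt ((cmod w)\<^sup>2 - a\<^sup>2) =
      2 * of_int \<bar>k\<bar> * pi + of_int (sgn k) * Arg w - arccos (a / cmod w)"
proof -
  define r where "r = cmod w"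
  define \<phi> where "\<phi> = arccos (a / r)"
  define R where "R = Gamma_radius k \<psi> \<tau>"
  have r: "r > 0"
    using w by (simp add: r_def)
  have ar: "-1 < a / r" "a / r < 1"
    using aw r by (auto simp: r_def field_simps abs_less_iff)
  have \<phi>: "0 < \<phi>" "\<phi> < pi" "cos \<phi> = a / r"
    using arccos_lt_bounded[OF ar] ar by (auto simp: \<phi>_def)
  have sin\<phi>: "sin \<phi> > 0"
    using \<phi> sin_gt_zero by blast
  have polar_eq: "s * a = R \<beta> * cos \<beta> \<and> of_real s * w = of_real (R \<beta>) * cis \<psi> \<longleftrightarrow>
      \<beta> = \<phi> \<and> Arg w = \<psi> \<and> s * r = R \<phi>" if \<beta>: "0 < \<beta>" "\<beta> < pi" for \<beta>
  proof -
    have "s * a = R \<beta> * cos \<beta> \<and> s * r = R \<beta> \<longleftrightarrow> \<beta> = \<phi> \<and> s * r = R \<phi>"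
    proof
      assume polar: "s * a = R \<beta> * cos \<beta> \<and> s * r = R \<beta>"
      then have "s * a = s * (r * cos \<beta>)"
        by simp
      then have "cos \<beta> = a / r"
        using s r by (simp add: field_simps)
      then show "\<beta> = \<phi> \<and> s * r = R \<phi>"
        using polar \<beta> arccos_cos[of \<beta>] by (simp add: \<phi>_def)
    qed (use \<phi>(3) s r in \<open>auto simp: field_simps\<close>)
    then show ?thesis
      using scaled_eq_rcis_iff[OF s w _ \<psi>, of "R \<beta>"] Gamma_radius_pos[OF k \<tau> \<psi> \<beta>]
      by (auto simp: R_def r_def)
  qed
  have "(s * a, of_real s * w) \<in> Gamma_k k \<psi> \<tau> \<longleftrightarrow>
      (\<exists>\<beta>\<in>{0<..<pi}. s * a = R \<beta> * cos \<beta> \<and> of_real s * w = of_real (R \<beta>) * cis \<psi>)"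
    using \<tau> by (simp add: mem_Gamma_k_polar[OF k] R_def)
  also have "\<dots> \<longleftrightarrow> (\<exists>\<beta>\<in>{0<..<pi}. \<beta> = \<phi> \<and> Arg w = \<psi> \<and> s * r = R \<phi>)"
    using polar_eq by (intro bex_cong) auto
  also have "\<dots> \<longleftrightarrow> Arg w = \<psi> \<and> s * r = R \<phi>"
    using \<phi>(1,2) by auto
  also have "s * r = R \<phi> \<longleftrightarrow> \<tau> * s * (r * sin \<phi>) =
      2 * of_int \<bar>k\<bar> * pi + of_int (sgn k) * \<psi> - \<phi>"
    using \<tau> sin\<phi> by (simp add: R_def Gamma_radius_def eq_divide_eq mult_ac)
  finally show ?thesis
    using sqrt_diff_square_eq_sin_arccos[OF aw] by (auto simp: r_def \<phi>_def)
qed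

theorem mainTheorem20:
  fixes \<psi> \<tau> :: real and k :: int
  assumes "-pi < \<psi>" "\<psi> \<le> pi" "\<tau> > 0" "k \<noteq> 0"
  shows "\<forall>(a::real) (w::complex) (s::real). w \<noteq> 0 \<longrightarrow> \<bar>a\<bar> < cmod w \<longrightarrow> s > 0 \<longrightarrow>
           ((s * a, of_real s * w) \<in> Gamma_k k \<psi> \<tau> \<longleftrightarrow>
             (if k > 0 then s = tau_plus (nat k) a w / \<tau> else s = tau_minus (nat (- k)) a w / \<tau>)
             \<and> Arg w = \<psi>)"
proof (intro allI impI)
  fix a s :: real and w :: complex
  assume w: "w \<noteq> 0" and aw: "\<bar>a\<bar> < cmod w" and s: "s > 0"
  have "sqrt ((cmod w)\<^sup>2 - a\<^sup>2) > 0"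
    using aw abs_le_square_iff[of "cmod w" a] by auto
  then have "(if k > 0 then s = tau_plus (nat k) a w / \<tau> else s = tau_minus (nat (- k)) a w / \<tau>)
      \<longleftrightarrow> \<tau> * s * sqrt ((cmod w)\<^sup>2 - a\<^sup>2) =
            2 * of_int \<bar>k\<bar> * pi + of_int (sgn k) * Arg w - arccos (a / cmod w)"
    using assms(3,4) by (auto simp: tau_plus_def tau_minus_def field_simps)
  then show "(s * a, of_real s * w) \<in> Gamma_k k \<psi> \<tau> \<longleftrightarrow>
      (if k > 0 then s = tau_plus (nat k) a w / \<tau> else s = tau_minus (nat (- k)) a w / \<tau>)
      \<and> Arg w = \<psi>"
    using scaled_mem_Gamma_k_iff[OF assms(4,3,1,2) w aw s] by auto
qed

end
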